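(* Let $\mathbb{A}$ be a 2-category and $p:e\to b$ a 1-cell such that $\mathbb{A}$ has the two-dimensional cokernel diagram of $p$, a right Kan extension $(t,\gamma)$ of $p$ along $p$ exists, and it is preserved by $\delta^0:b\to b\uparrow_pb$. Let $\ell:b\uparrow_pb\to b$ be the unique 1-cell with $\ell\delta^0=\mathrm{id}_b$, $\ell\delta^1=t$, $\mathrm{id}_\ell\ast\alpha=\gamma$, and let $\bar\ell:b\uparrow_pb\uparrow_pb\to b$ be the unique 1-cell with $\bar\ell D^0=\ell$ and $\bar\ell D^2=t\ell$. Then $\bar\ell D^1$ is the unique 1-cell $k:b\uparrow_pb\to b$ such that $k\delta^1=tt$, $k\delta^0=\mathrm{id}_b$ and $\mathrm{id}_k\ast\alpha=\gamma\cdot(\mathrm{id}_t\ast\gamma)$.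
   Context: A 2-category is a $\mathbf{Cat}$-enriched category; composition of 1-cells is juxtaposition, vertical composition of 2-cells is $\cdot$, horizontal composition is $\ast$, $\mathrm{id}_f$ is the identity 2-cell on $f$. Opcomma object of $p$ along itself: an object $b\uparrow_p b$ with 1-cells $\delta^0,\delta^1:b\to b\uparrow_p b$ and a 2-cell $\alpha:\delta^1p\Rightarrow\delta^0p$ such that for every object $y$ the functor $h\mapsto(h\delta^0,h\delta^1,\mathrm{id}_h\ast\alpha)$, $\xi\mapsto(\xi\ast\mathrm{id}_{\delta^0},\xi\ast\mathrm{id}_{\delta^1})$ is an isomorphism from $\mathbb{A}(b\uparrow_p b,y)$ onto the category of triples $(h_0,h_1:b\to y,\ \beta:h_1p\Rightarrow h_0p)$ with morphisms pairs of 2-cells $(\xi_0:h_0\Rightarrow h_0',\xi_1:h_1\Rightarrow h_1')$ satisfying $(\xi_0\ast\mathrm{id}_p)\cdot\beta=\beta'\cdot(\xi_1\ast\mathrm{id}_p)$. Two-dimensional pushout of a span $f_0:c\to c_0$, $f_1:c\to c_1$: an object $P$ with $q_0:c_0\to P$, $q_1:c_1\to P$, $q_0f_0=q_1f_1$, such that for every $y$, $k\mapsto(kq_0,kq_1)$ is an isomorphism from $\mathbb{A}(P,y)$ onto the category of pairs $(k_0,k_1)$ with $k_0f_0=k_1f_1$, whose morphisms are pairs of 2-cells $(\xi_0,\xi_1)$ with $\xi_0\ast\mathrm{id}_{f_0}=\xi_1\ast\mathrm{id}_{f_1}$. $\mathbb{A}$ has the two-dimensional cokernel diagram of $p$ if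 it has an opcomma object $b\uparrow_p b$ of $p$ along itself and a two-dimensional pushout $b\uparrow_pb\uparrow_pb$ of the span $(\delta^0,\delta^1)$, with 1-cells $D^0,D^2:b\uparrow_pb\to b\uparrow_pb\uparrow_pb$ satisfying $D^2\delta^0=D^0\delta^1$. Then $D^1:b\uparrow_pb\to b\uparrow_pb\uparrow_pb$ denotes the unique 1-cell with $D^1\delta^1=D^2\delta^1$, $D^1\delta^0=D^0\delta^0$ and $\mathrm{id}_{D^1}\ast\alpha=(\mathrm{id}_{D^0}\ast\alpha)\cdot(\mathrm{id}_{D^2}\ast\alpha)$. Right Kan extension of $f:z\to y$ along $g:z\to x$: a pair $(r:x\to y,\gamma:rg\Rightarrow f)$ such that for each $k:x\to y$, $\beta\mapsto\gamma\cdot(\beta\ast\mathrm{id}_g)$ is a bijection from 2-cells $k\Rightarrow r$ to 2-cells $kg\Rightarrow f$. A 1-cell $d:y\to y'$ preserves it if $(dr,\mathrm{id}_d\ast\gamma)$ is a right Kan extension of $df$ along $g$. *)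

theory Defs
  imports Main
begin

text \<open>Convention: cmp C g f is the composite "g f" (first f, then g);
vc C b a is the vertical composite "b \<cdot> a" (first a, then b);
hc C b a is the horizontal composite "b * a" (a : f \<Rightarrow> f', b : g \<Rightarrow> g',
b * a : g f \<Rightarrow> g' f').\<close>

record ('o, 'a, 'c) two_cat =
  Ob :: "'o set"
  Ar :: "'a set"
  Cl :: "'c set"
  dom1 :: "'a \<Rightarrow> 'o"
  cod1 :: "'a \<Rightarrow> 'o"
  id1 :: "'o \<Rightarrow> 'a"
  cmp :: "'a \<Rightarrow> 'a \<Rightarrow> 'a"
  src2 :: "'c \<Rightarrow> 'a"
  tgt2 :: "'c \<Rightarrow> 'a"
  id2 :: "'a \<Rightarrow> 'c"
  vc :: "'c \<Rightarrow> 'c \<Rightarrow> 'c"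
  hc :: "'c \<Rightarrow> 'c \<Rightarrow> 'c"

definition two_category :: "('o, 'a, 'c, 'x) two_cat_scheme \<Rightarrow> bool" where
"two_category C \<longleftrightarrow>
  (\<forall>f\<in>Ar C. dom1 C f \<in> Ob C \<and> cod1 C f \<in> Ob C) \<and>
  (\<forall>x\<in>Ob C. id1 C x \<in> Ar C \<and> dom1 C (id1 C x) = x \<and> cod1 C (id1 C x) = x) \<and>
  (\<forall>f\<in>Ar C. \<forall>g\<in>Ar C. dom1 C g = cod1 C f \<longrightarrow>
      cmp C g f \<in> Ar C \<and> dom1 C (cmp C g f) = dom1 C f \<and> cod1 C (cmp C g f) = cod1 C g) \<and>
  (\<forall>f\<in>Ar C. cmp C (id1 C (cod1 C f)) f = f \<and> cmp C f (id1 C (dom1 C f)) = f) \<and>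
  (\<forall>f\<in>Ar C. \<forall>g\<in>Ar C. \<forall>h\<in>Ar C. dom1 C g = cod1 C f \<longrightarrow> dom1 C h = cod1 C g \<longrightarrow>
      cmp C h (cmp C g f) = cmp C (cmp C h g) f) \<and>
  (\<forall>a\<in>Cl C. src2 C a \<in> Ar C \<and> tgt2 C a \<in> Ar C \<and>
      dom1 C (src2 C a) = dom1 C (tgt2 C a) \<and> cod1 C (src2 C a) = cod1 C (tgt2 C a)) \<and>
  (\<forall>f\<in>Ar C. id2 C f \<in> Cl C \<and> src2 C (id2 C f) = f \<and> tgt2 C (id2 C f) = f) \<and>
  (\<forall>a\<in>Cl C. \<forall>b\<in>Cl C. src2 C b = tgt2 C a \<longrightarrow>
      vc C b a \<in> Cl C \<and> src2 C (vc C b a) = src2 C a \<and> tgt2 C (vc C b a) = tgt2 C b) \<and>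
  (\<forall>a\<in>Cl C. vc C (id2 C (tgt2 C a)) a = a \<and> vc C a (id2 C (src2 C a)) = a) \<and>
  (\<forall>a\<in>Cl C. \<forall>b\<in>Cl C. \<forall>c\<in>Cl C. src2 C b = tgt2 C a \<longrightarrow> src2 C c = tgt2 C b \<longrightarrow>
      vc C c (vc C b a) = vc C (vc C c b) a) \<and>
  (\<forall>a\<in>Cl C. \<forall>b\<in>Cl C. dom1 C (src2 C b) = cod1 C (src2 C a) \<longrightarrow>
      hc C b a \<in> Cl C \<and> src2 C (hc C b a) = cmp C (src2 C b) (src2 C a) \<and>
      tgt2 C (hc C b a) = cmp C (tgt2 C b) (tgt2 C a)) \<and>
  (\<forall>f\<in>Ar C. \<forall>g\<in>Ar C. dom1 C g = cod1 C f \<longrightarrow> hc C (id2 C g) (id2 C f) = id2 C (cmp C g f)) \<and>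
  (\<forall>a\<in>Cl C. \<forall>a'\<in>Cl C. \<forall>b\<in>Cl C. \<forall>b'\<in>Cl C.
      src2 C a' = tgt2 C a \<longrightarrow> src2 C b' = tgt2 C b \<longrightarrow> dom1 C (src2 C b) = cod1 C (src2 C a) \<longrightarrow>
      vc C (hc C b' a') (hc C b a) = hc C (vc C b' b) (vc C a' a)) \<and>
  (\<forall>a\<in>Cl C. \<forall>b\<in>Cl C. \<forall>c\<in>Cl C. dom1 C (src2 C b) = cod1 C (src2 C a) \<longrightarrow>
      dom1 C (src2 C c) = cod1 C (src2 C b) \<longrightarrow> hc C c (hc C b a) = hc C (hc C c b) a) \<and>
  (\<forall>a\<in>Cl C. hc C (id2 C (id1 C (cod1 C (src2 C a)))) a = a \<and>
      hc C a (id2 C (id1 C (dom1 C (src2 C a)))) = a)"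

definition hom1 :: "('o, 'a, 'c, 'x) two_cat_scheme \<Rightarrow> 'o \<Rightarrow> 'o \<Rightarrow> 'a set" where
"hom1 C x y = {f \<in> Ar C. dom1 C f = x \<and> cod1 C f = y}"

definition cell :: "('o, 'a, 'c, 'x) two_cat_scheme \<Rightarrow> 'a \<Rightarrow> 'a \<Rightarrow> 'c set" where
"cell C f g = {a \<in> Cl C. src2 C a = f \<and> tgt2 C a = g}"

text \<open>Opcomma object (bb, d0, d1, al) of p : e \<rightarrow> b along itself: the canonical functor
from A(bb, y) to the category of triples is an isomorphism of categories, i.e. bijective on
objects and bijective on each hom-set.\<close>
definition opcomma_triples ::
  "('o, 'a, 'c, 'x) two_cat_scheme \<Rightarrow> 'a \<Rightarrow> 'o \<Rightarrow> 'o \<Rightarrow> ('a \<times> 'a \<times> 'c) set" where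
"opcomma_triples C p b y =
   {(h0, h1, be). h0 \<in> hom1 C b y \<and> h1 \<in> hom1 C b y \<and> be \<in> cell C (cmp C h1 p) (cmp C h0 p)}"

definition opcomma_triple_maps ::
  "('o, 'a, 'c, 'x) two_cat_scheme \<Rightarrow> 'a \<Rightarrow> ('a \<times> 'a \<times> 'c) \<Rightarrow> ('a \<times> 'a \<times> 'c) \<Rightarrow> ('c \<times> 'c) set" where
"opcomma_triple_maps C p T T' =
   (case T of (h0, h1, be) \<Rightarrow> case T' of (h0', h1', be') \<Rightarrow>
     {(x0, x1). x0 \<in> cell C h0 h0' \<and> x1 \<in> cell C h1 h1' \<and>
        vc C (hc C x0 (id2 C p)) be = vc C be' (hc C x1 (id2 C p))})"

definition is_opcomma ::
  "('o, 'a, 'c, 'x) two_cat_scheme \<Rightarrow> 'o \<Rightarrow> 'o \<Rightarrow> 'a \<Rightarrow> 'o \<Rightarrow> 'a \<Rightarrow> 'a \<Rightarrow> 'c \<Rightarrow> bool" where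
"is_opcomma C e b p bb d0 d1 al \<longleftrightarrow>
   p \<in> hom1 C e b \<and> bb \<in> Ob C \<and> d0 \<in> hom1 C b bb \<and> d1 \<in> hom1 C b bb \<and>
   al \<in> cell C (cmp C d1 p) (cmp C d0 p) \<and>
   (\<forall>y\<in>Ob C.
      bij_betw (\<lambda>h. (cmp C h d0, cmp C h d1, hc C (id2 C h) al)) (hom1 C bb y) (opcomma_triples C p b y) \<and>
      (\<forall>h\<in>hom1 C bb y. \<forall>h'\<in>hom1 C bb y.
         bij_betw (\<lambda>xi. (hc C xi (id2 C d0), hc C xi (id2 C d1))) (cell C h h')
           (opcomma_triple_maps C p (cmp C h d0, cmp C h d1, hc C (id2 C h) al)
                                    (cmp C h' d0, cmp C h' d1, hc C (id2 C h') al))))"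

definition is_2pushout ::
  "('o, 'a, 'c, 'x) two_cat_scheme \<Rightarrow> 'o \<Rightarrow> 'o \<Rightarrow> 'o \<Rightarrow> 'a \<Rightarrow> 'a \<Rightarrow> 'o \<Rightarrow> 'a \<Rightarrow> 'a \<Rightarrow> bool" where
"is_2pushout C c c0 c1 f0 f1 P q0 q1 \<longleftrightarrow>
   f0 \<in> hom1 C c c0 \<and> f1 \<in> hom1 C c c1 \<and> P \<in> Ob C \<and> q0 \<in> hom1 C c0 P \<and> q1 \<in> hom1 C c1 P \<and>
   cmp C q0 f0 = cmp C q1 f1 \<and>
   (\<forall>y\<in>Ob C.
      bij_betw (\<lambda>k. (cmp C k q0, cmp C k q1)) (hom1 C P y)
        {(k0, k1). k0 \<in> hom1 C c0 y \<and> k1 \<in> hom1 C c1 y \<and> cmp C k0 f0 = cmp C k1 f1} \<and>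
      (\<forall>k\<in>hom1 C P y. \<forall>k'\<in>hom1 C P y.
         bij_betw (\<lambda>xi. (hc C xi (id2 C q0), hc C xi (id2 C q1))) (cell C k k')
           {(x0, x1). x0 \<in> cell C (cmp C k q0) (cmp C k' q0) \<and> x1 \<in> cell C (cmp C k q1) (cmp C k' q1) \<and>
              hc C x0 (id2 C f0) = hc C x1 (id2 C f1)}))"

definition is_ran ::
  "('o, 'a, 'c, 'x) two_cat_scheme \<Rightarrow> 'o \<Rightarrow> 'o \<Rightarrow> 'o \<Rightarrow> 'a \<Rightarrow> 'a \<Rightarrow> 'a \<Rightarrow> 'c \<Rightarrow> bool" where
"is_ran C z x y f g r ga \<longleftrightarrow>
   f \<in> hom1 C z y \<and> g \<in> hom1 C z x \<and> r \<in> hom1 C x y \<and> ga \<in> cell C (cmp C r g) f \<and>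
   (\<forall>k\<in>hom1 C x y. bij_betw (\<lambda>be. vc C ga (hc C be (id2 C g))) (cell C k r) (cell C (cmp C k g) f))"

definition preserves_ran ::
  "('o, 'a, 'c, 'x) two_cat_scheme \<Rightarrow> 'o \<Rightarrow> 'o \<Rightarrow> 'o \<Rightarrow> 'o \<Rightarrow> 'a \<Rightarrow> 'a \<Rightarrow> 'a \<Rightarrow> 'c \<Rightarrow> 'a \<Rightarrow> bool" where
"preserves_ran C z x y y' f g r ga d \<longleftrightarrow>
   d \<in> hom1 C y y' \<and> is_ran C z x y' (cmp C d f) g (cmp C d r) (hc C (id2 C d) ga)"

end

theory Submission
  imports Defs
begin

text \<open>Both \<open>\<ell> D\<^sup>1\<close> and any such \<open>k\<close> induce the same triple \<open>(id\<^sub>b, t t, \<gamma> \<cdot> (id\<^sub>t * \<gamma>))\<close>,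
  so they agree by the one-dimensional universal property of the opcomma object. That
  \<open>\<ell> D\<^sup>1\<close> induces this triple is a whiskering computation: \<open>D\<^sup>1\<close> whiskers \<open>\<alpha>\<close> into
  \<open>(D\<^sup>0 * \<alpha>) \<cdot> (D\<^sup>2 * \<alpha>)\<close>, and \<open>\<ell>\<close> sends the two factors to \<open>\<gamma>\<close> and \<open>t * \<gamma>\<close>.\<close>

lemma cmp_in_hom1:
  "two_category C \<Longrightarrow> f \<in> hom1 C x y \<Longrightarrow> g \<in> hom1 C y z \<Longrightarrow> cmp C g f \<in> hom1 C x z"
  unfolding two_category_def hom1_def by auto

lemma cmp_assoc:
  "two_category C \<Longrightarrow> f \<in> hom1 C x y \<Longrightarrow> g \<in> hom1 C y z \<Longrightarrow> h \<in> hom1 C z w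
    \<Longrightarrow> cmp C h (cmp C g f) = cmp C (cmp C h g) f"
  unfolding two_category_def hom1_def by auto

lemma id2_in_cell: "two_category C \<Longrightarrow> f \<in> hom1 C x y \<Longrightarrow> id2 C f \<in> cell C f f"
  unfolding two_category_def hom1_def cell_def by auto

lemma hc_in_cell:
  "two_category C \<Longrightarrow> a \<in> cell C f f' \<Longrightarrow> b \<in> cell C g g'
    \<Longrightarrow> f \<in> hom1 C x y \<Longrightarrow> g \<in> hom1 C y z \<Longrightarrow> hc C b a \<in> cell C (cmp C g f) (cmp C g' f')"
  unfolding two_category_def hom1_def cell_def by auto

lemma hc_id2_id2:
  "two_category C \<Longrightarrow> f \<in> hom1 C x y \<Longrightarrow> g \<in> hom1 C y z
    \<Longrightarrow> hc C (id2 C g) (id2 C f) = id2 C (cmp C g f)"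
  unfolding two_category_def hom1_def by auto

lemma vc_id2_id2: "two_category C \<Longrightarrow> f \<in> hom1 C x y \<Longrightarrow> vc C (id2 C f) (id2 C f) = id2 C f"
  unfolding two_category_def hom1_def by (metis (no_types, lifting) mem_Collect_eq)

lemma hc_assoc:
  "two_category C \<Longrightarrow> a \<in> cell C f f' \<Longrightarrow> b \<in> cell C g g' \<Longrightarrow> c \<in> cell C h h'
    \<Longrightarrow> f \<in> hom1 C x y \<Longrightarrow> g \<in> hom1 C y z \<Longrightarrow> h \<in> hom1 C z w
    \<Longrightarrow> hc C c (hc C b a) = hc C (hc C c b) a"
  unfolding two_category_def hom1_def cell_def by auto

lemma interchange:
  "two_category C \<Longrightarrow> a \<in> cell C f f' \<Longrightarrow> a' \<in> cell C f' f''
    \<Longrightarrow> b \<in> cell C g g' \<Longrightarrow> b' \<in> cell C g' g''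
    \<Longrightarrow> f \<in> hom1 C x y \<Longrightarrow> g \<in> hom1 C y z
    \<Longrightarrow> vc C (hc C b' a') (hc C b a) = hc C (vc C b' b) (vc C a' a)"
  unfolding two_category_def hom1_def cell_def by auto

lemma whisker_cmp:
  assumes C: "two_category C" and a: "a \<in> cell C f f'"
    and f: "f \<in> hom1 C x y" and h: "h \<in> hom1 C y z" and g: "g \<in> hom1 C z w"
  shows "hc C (id2 C (cmp C g h)) a = hc C (id2 C g) (hc C (id2 C h) a)"
  using hc_assoc[OF C a id2_in_cell[OF C h] id2_in_cell[OF C g] f h g] hc_id2_id2[OF C h g]
  by simp

lemma whisker_vc:
  assumes C: "two_category C" and a: "a \<in> cell C f f'" and a': "a' \<in> cell C f' f''"
    and f: "f \<in> hom1 C x y" and k: "k \<in> hom1 C y z"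
  shows "hc C (id2 C k) (vc C a' a) = vc C (hc C (id2 C k) a') (hc C (id2 C k) a)"
  using interchange[OF C a a' id2_in_cell[OF C k] id2_in_cell[OF C k] f k] vc_id2_id2[OF C k]
  by simp

lemma opcomma_1cell_eqI:
  assumes "is_opcomma C e b p bb d0 d1 al" and "y \<in> Ob C"
    and "h \<in> hom1 C bb y" and "h' \<in> hom1 C bb y"
    and "cmp C h d0 = cmp C h' d0" and "cmp C h d1 = cmp C h' d1"
    and "hc C (id2 C h) al = hc C (id2 C h') al"
  shows "h = h'"
proof -
  have "inj_on (\<lambda>h. (cmp C h d0, cmp C h d1, hc C (id2 C h) al)) (hom1 C bb y)"
    using assms(1,2) unfolding is_opcomma_def bij_betw_def by blast
  then show ?thesis using assms(3-) by (auto dest: inj_onD)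
qed

text \<open>Of the Kan extension only the typing of \<open>t\<close> is used: once \<open>\<ell>\<close> and \<open>\<bar>\<ell>\<close> are given,
  neither its universal property nor its preservation by \<open>\<delta>\<^sup>0\<close> plays a role.\<close>

theorem lemma4p5:
  fixes C :: "('o, 'a, 'c) two_cat"
  assumes A: "two_category C"
    and opc: "is_opcomma C e b p bb d0 d1 al"
    and po: "is_2pushout C b bb bb d0 d1 P D2 D0"
    and D1: "D1 \<in> hom1 C bb P" "cmp C D1 d1 = cmp C D2 d1" "cmp C D1 d0 = cmp C D0 d0"
      "hc C (id2 C D1) al = vc C (hc C (id2 C D0) al) (hc C (id2 C D2) al)"
    and ran: "is_ran C e b b p p t ga"
    and pres: "preserves_ran C e b b bb p p t ga d0"
    and l: "l \<in> hom1 C bb b" "cmp C l d0 = id1 C b" "cmp C l d1 = t" "hc C (id2 C l) al = ga"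
    and lb: "lb \<in> hom1 C P b" "cmp C lb D0 = l" "cmp C lb D2 = cmp C t l"
  shows "cmp C lb D1 \<in> hom1 C bb b \<and> cmp C (cmp C lb D1) d1 = cmp C t t \<and>
         cmp C (cmp C lb D1) d0 = id1 C b \<and>
         hc C (id2 C (cmp C lb D1)) al = vc C ga (hc C (id2 C t) ga) \<and>
         (\<forall>k\<in>hom1 C bb b. cmp C k d1 = cmp C t t \<longrightarrow> cmp C k d0 = id1 C b \<longrightarrow>
            hc C (id2 C k) al = vc C ga (hc C (id2 C t) ga) \<longrightarrow> k = cmp C lb D1)"
proof -
  have p: "p \<in> hom1 C e b" and d0: "d0 \<in> hom1 C b bb" and d1: "d1 \<in> hom1 C b bb"
    and al: "al \<in> cell C (cmp C d1 p) (cmp C d0 p)"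
    using opc unfolding is_opcomma_def by auto
  have D2: "D2 \<in> hom1 C bb P" and D0: "D0 \<in> hom1 C bb P" and sq: "cmp C D2 d0 = cmp C D0 d1"
    using po unfolding is_2pushout_def by auto
  have t: "t \<in> hom1 C b b" using ran unfolding is_ran_def by auto
  have b: "b \<in> Ob C" using t A unfolding hom1_def two_category_def by auto
  have d1p: "cmp C d1 p \<in> hom1 C e bb" by (rule cmp_in_hom1[OF A p d1])
  have k0: "cmp C lb D1 \<in> hom1 C bb b" by (rule cmp_in_hom1[OF A D1(1) lb(1)])
  have k0_d1: "cmp C (cmp C lb D1) d1 = cmp C t t"
    using cmp_assoc[OF A d1 D1(1) lb(1)] cmp_assoc[OF A d1 D2 lb(1)] cmp_assoc[OF A d1 l(1) t]
      D1(2) lb(3) l(3) by simp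
  have k0_d0: "cmp C (cmp C lb D1) d0 = id1 C b"
    using cmp_assoc[OF A d0 D1(1) lb(1)] cmp_assoc[OF A d0 D0 lb(1)] D1(3) lb(2) l(2) by simp
  have D0al: "hc C (id2 C D0) al \<in> cell C (cmp C D0 (cmp C d1 p)) (cmp C D0 (cmp C d0 p))"
    by (rule hc_in_cell[OF A al id2_in_cell[OF A D0] d1p D0])
  have D2al: "hc C (id2 C D2) al \<in> cell C (cmp C D2 (cmp C d1 p)) (cmp C D0 (cmp C d1 p))"
    using hc_in_cell[OF A al id2_in_cell[OF A D2] d1p D2]
      cmp_assoc[OF A p d0 D2] cmp_assoc[OF A p d1 D0] sq by simp
  have "hc C (id2 C (cmp C lb D1)) al
      = vc C (hc C (id2 C lb) (hc C (id2 C D0) al)) (hc C (id2 C lb) (hc C (id2 C D2) al))"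
    using whisker_cmp[OF A al d1p D1(1) lb(1)] D1(4)
      whisker_vc[OF A D2al D0al cmp_in_hom1[OF A d1p D2] lb(1)] by simp
  also have "hc C (id2 C lb) (hc C (id2 C D0) al) = ga"
    using whisker_cmp[OF A al d1p D0 lb(1)] lb(2) l(4) by simp
  also have "hc C (id2 C lb) (hc C (id2 C D2) al) = hc C (id2 C t) ga"
    using whisker_cmp[OF A al d1p D2 lb(1)] whisker_cmp[OF A al d1p l(1) t] lb(3) l(4) by simp
  finally have k0_al: "hc C (id2 C (cmp C lb D1)) al = vc C ga (hc C (id2 C t) ga)" .
  have "k = cmp C lb D1"
    if "k \<in> hom1 C bb b" "cmp C k d1 = cmp C t t" "cmp C k d0 = id1 C b"
      "hc C (id2 C k) al = vc C ga (hc C (id2 C t) ga)" for k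
    using opcomma_1cell_eqI[OF opc b that(1) k0] that(2-4) k0_d0 k0_d1 k0_al by simp
  then show ?thesis using k0 k0_d0 k0_d1 k0_al by blast
qed

end
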